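(* Let $c>0$, $\alpha\ge 0$, and let $s_{\alpha,c}:\mathbb R\to[0,1]$ be the SIGTRON function defined below. For every $n\in\{1,2,3,\dots\}$ and every $\alpha\in\left(1-\frac1n,\,1+\frac1n\right)$, the $n$-th derivative of $s_{\alpha,c}$ exists and is continuous on $\mathbb R$, and it is given by $$\nabla^n s_{\alpha,c}(x)=\begin{cases}\sum_{k=1}^n F_{n,k}(x) & \text{if } x\in\mathrm{dom}(\sigma_{\alpha,c}),\\ 0 & \text{otherwise,}\end{cases}$$ where $$F_{n,k}(x)=A_{n,k}\,\frac{c\,\big(\exp_{\alpha,c}(-x)\big)^{k-n(1-\alpha)}}{\big(c+\exp_{\alpha,c}(-x)\big)^{k+1}},\qquad A_{n,k}=(-1)^{n+k}\,k!\sum_{l=0}^n {\left[n \atop l\right]}{\left\{ l \atop k \right\}}(\alpha-1)^{n-l}.$$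
   Context: For $c>0$ and $\alpha\ge 0$ put $c_\alpha=\frac{1}{\alpha-1}c^{1-\alpha}$ (for $\alpha\ne1$). The extended exponential function is $\exp_{\alpha,c}(x)=c\exp(x)$ if $\alpha=1$ and $\exp_{\alpha,c}(x)=c\left(1-\frac{x}{c_\alpha}\right)^{1/(1-\alpha)}$ otherwise, on the restricted domain $\mathrm{dom}(\exp_{\alpha,c})=\mathbb R$ if $\alpha=1$, $\mathbb R_{\ge c_\alpha}=\{x\ge c_\alpha\}$ if $0\le\alpha<1$, and $\mathbb R_{<c_\alpha}$ if $\alpha>1$. The extended asymmetric sigmoid is $\sigma_{\alpha,c}(x)=\frac{c}{c+\exp_{\alpha,c}(-x)}$ with domain $\mathrm{dom}(\sigma_{\alpha,c})=\mathbb R$ if $\alpha=1$, $\{x\le -c_\alpha\}$ if $0\le\alpha<1$, and $\{x\ge -c_\alpha\}$ if $\alpha>1$ (where for $\alpha>1$ one sets $\sigma_{\alpha,c}(-c_\alpha)=\lim_{x\searrow -c_\alpha}\sigma_{\alpha,c}(x)=0$). SIGTRON is $s_{\alpha,c}(x)=\sigma_{\alpha,c}(x)$ if $x\in\mathrm{dom}(\sigma_{\alpha,c})$ and $s_{\alpha,c}(x)=\sigma_P(x)$ otherwise, where $\sigma_P(x)=1$ if $x\ge0$ and $0$ otherwise. ${\left[n \atop l\right]}$ denotes the (unsigned) Stirling number of the first kind, with recurrence ${\left[n \atop l\right]}=(n-1){\left[n-1 \atop l\right]}+{\left[n-1 \atop l-1\right]}$, and ${\left\{ l \atop k \right\}}$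 the Stirling number of the second kind, with recurrence ${\left\{ l \atop k \right\}}=k{\left\{ l-1 \atop k \right\}}+{\left\{ l-1 \atop k-1 \right\}}$; conventions ${\left\{0\atop0\right\}}={\left[0\atop0\right]}=1$, ${\left\{a\atop0\right\}}={\left[a\atop0\right]}=0$ for $a\ge1$, and both vanish when the lower index exceeds the upper. The convention $0^0=1$ is used in $(\alpha-1)^{n-l}$. *)

theory Defs
  imports "HOL-Analysis.Analysis" "HOL-Combinatorics.Stirling"
begin

definition c_alpha :: "real \<Rightarrow> real \<Rightarrow> real" where
  "c_alpha \<alpha> c = (1 / (\<alpha> - 1)) * c powr (1 - \<alpha>)"

text \<open>Extended exponential (the value is only meaningful on its domain).\<close>
definition exp_ext :: "real \<Rightarrow> real \<Rightarrow> real \<Rightarrow> real" where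
  "exp_ext \<alpha> c x = (if \<alpha> = 1 then c * exp x
     else c * (1 - x / c_alpha \<alpha> c) powr (1 / (1 - \<alpha>)))"

definition dom_sigma :: "real \<Rightarrow> real \<Rightarrow> real set" where
  "dom_sigma \<alpha> c = (if \<alpha> = 1 then UNIV
     else if \<alpha> < 1 then {x. x \<le> - c_alpha \<alpha> c}
     else {x. x \<ge> - c_alpha \<alpha> c})"

text \<open>Extended asymmetric sigmoid; for alpha > 1 the boundary value at -c_alpha is the limit 0.\<close>
definition sigma_ext :: "real \<Rightarrow> real \<Rightarrow> real \<Rightarrow> real" where
  "sigma_ext \<alpha> c x = (if \<alpha> > 1 \<and> x = - c_alpha \<alpha> c then 0
     else c / (c + exp_ext \<alpha> c (- x)))"

definition perceptron :: "real \<Rightarrow> real" where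
  "perceptron x = (if x \<ge> 0 then 1 else 0)"

definition sigtron :: "real \<Rightarrow> real \<Rightarrow> real \<Rightarrow> real" where
  "sigtron \<alpha> c x = (if x \<in> dom_sigma \<alpha> c then sigma_ext \<alpha> c x else perceptron x)"

text \<open>A_{n,k}; stirling = unsigned first kind, Stirling = second kind; 0^0 = 1.\<close>
definition A_coef :: "real \<Rightarrow> nat \<Rightarrow> nat \<Rightarrow> real" where
  "A_coef \<alpha> n k = (-1) ^ (n + k) * fact k *
     (\<Sum>l=0..n. real (stirling n l) * real (Stirling l k) * (\<alpha> - 1) ^ (n - l))"

definition F_term :: "real \<Rightarrow> real \<Rightarrow> nat \<Rightarrow> nat \<Rightarrow> real \<Rightarrow> real" where
  "F_term \<alpha> c n k x = A_coef \<alpha> n k *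
     (c * (exp_ext \<alpha> c (- x)) powr (real k - real n * (1 - \<alpha>)))
       / (c + exp_ext \<alpha> c (- x)) ^ (k + 1)"

text \<open>Claimed n-th derivative. At the boundary point x = -c_alpha for alpha > 1
  the formula is read as its limit, which is 0.\<close>
definition sigtron_nth_deriv :: "real \<Rightarrow> real \<Rightarrow> nat \<Rightarrow> real \<Rightarrow> real" where
  "sigtron_nth_deriv \<alpha> c n x =
     (if x \<in> dom_sigma \<alpha> c then
        (if \<alpha> > 1 \<and> x = - c_alpha \<alpha> c then 0 else (\<Sum>k=1..n. F_term \<alpha> c n k x))
      else 0)"

end

theory Submission
  imports Defs "HOL-Real_Asymp.Real_Asymp"
begin

text \<open>On the interior of the domain, \<open>E x = exp_ext \<alpha> c (- x)\<close> is positive and solves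
  \<open>E' = - E powr \<alpha>\<close>. Hence the derivative of \<open>c * E powr p / (c + E) ^ (k + 1)\<close> is a combination
  of the terms with indices \<open>k\<close> and \<open>k + 1\<close> and with \<open>p\<close> shifted by \<open>\<alpha> - 1\<close>, and the
  recurrences of the two kinds of Stirling numbers combine to exactly the recurrence this
  imposes on the coefficients (\<open>A_coef_Suc\<close>). Off the domain the function is locally constant.
  At the boundary point \<open>- c_alpha \<alpha> c\<close> (present only for \<open>\<alpha> \<noteq> 1\<close>), \<open>E\<close> tends to \<open>0\<close> if
  \<open>\<alpha> < 1\<close> and to \<open>\<infinity>\<close> if \<open>\<alpha> > 1\<close>; the condition \<open>m * \<bar>\<alpha> - 1\<bar> < 1\<close> makes every term of the
  \<open>m\<close>-th formula tend to its boundary value, so the formula is continuous there, and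
  l'Hopital's rule upgrades continuity of the \<open>(m + 1)\<close>-st formula to differentiability of the
  \<open>m\<close>-th one at the boundary.\<close>

definition stirling_poly :: "real \<Rightarrow> nat \<Rightarrow> nat \<Rightarrow> real" where
  "stirling_poly t m k = (\<Sum>l\<le>m. real (stirling m l) * real (Stirling l k) * t ^ (m - l))"

lemma sum_stirling_Suc_shift:
  "real m * (\<Sum>j\<le>m. real (stirling m (Suc j)) * g (Suc j) * t ^ (m - j))
     = real m * t * (\<Sum>l\<le>m. real (stirling m l) * g l * t ^ (m - l))"
proof (cases m)
  case (Suc m')
  have "(\<Sum>j\<le>m. real (stirling m (Suc j)) * g (Suc j) * t ^ (m - j))
      = t * (\<Sum>j\<le>m'. real (stirling m (Suc j)) * g (Suc j) * t ^ (m' - j))"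
    using Suc by (simp add: sum_distrib_left Suc_diff_le mult_ac)
  also have "\<dots> = t * (\<Sum>l\<le>m. real (stirling m l) * g l * t ^ (m - l))"
    using Suc by (simp add: sum.atMost_Suc_shift del: sum.atMost_Suc)
  finally show ?thesis by simp
qed simp

lemma stirling_poly_Suc:
  "stirling_poly t (Suc m) k = real m * t * stirling_poly t m k
     + (\<Sum>j\<le>m. real (stirling m j) * real (Stirling (Suc j) k) * t ^ (m - j))"
proof -
  have "stirling_poly t (Suc m) k
      = (\<Sum>j\<le>m. (real m * real (stirling m (Suc j)) + real (stirling m j))
          * real (Stirling (Suc j) k) * t ^ (m - j))"
    by (simp add: stirling_poly_def sum.atMost_Suc_shift del: sum.atMost_Suc)
  also have "\<dots> = real m * (\<Sum>j\<le>m. real (stirling m (Suc j)) * real (Stirling (Suc j) k) * t ^ (m - j))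
      + (\<Sum>j\<le>m. real (stirling m j) * real (Stirling (Suc j) k) * t ^ (m - j))"
    by (simp add: sum_distrib_left sum.distrib algebra_simps)
  finally show ?thesis
    by (simp add: sum_stirling_Suc_shift[where g = "\<lambda>l. real (Stirling l k)"] stirling_poly_def)
qed

lemma stirling_poly_Suc_0: "stirling_poly t (Suc m) 0 = real m * t * stirling_poly t m 0"
  by (simp add: stirling_poly_Suc)

lemma stirling_poly_Suc_Suc:
  "stirling_poly t (Suc m) (Suc k)
     = (real (Suc k) + real m * t) * stirling_poly t m (Suc k) + stirling_poly t m k"
  by (subst stirling_poly_Suc) (simp add: stirling_poly_def sum.distrib sum_distrib_left algebra_simps)

lemma A_coef_eq_stirling_poly:
  "A_coef \<alpha> m k = (-1) ^ (m + k) * fact k * stirling_poly (\<alpha> - 1) m k"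
  by (simp add: A_coef_def stirling_poly_def atLeast0AtMost)

lemma A_coef_Suc:
  "A_coef \<alpha> (Suc m) k
     = - (real k - real m * (1 - \<alpha>)) * A_coef \<alpha> m k + real k * A_coef \<alpha> m (k - 1)"
  by (cases k)
     (simp_all add: A_coef_eq_stirling_poly stirling_poly_Suc_0 stirling_poly_Suc_Suc algebra_simps)

lemma A_coef_eq_0_if_less: "m < k \<Longrightarrow> A_coef \<alpha> m k = 0"
  by (simp add: A_coef_def)

lemma A_coef_0_0 [simp]: "A_coef \<alpha> 0 0 = 1"
  by (simp add: A_coef_def)

lemma A_coef_right_0:
  assumes "m \<noteq> 0"
  shows "A_coef \<alpha> m 0 = 0"
proof -
  have "real (stirling m l) * real (Stirling l 0) = 0" for l
    using assms by (cases l) simp_all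
  then show ?thesis by (auto simp: A_coef_def intro!: sum.neutral)
qed

lemma DERIV_from_tendsto_derivative:
  fixes f f' :: "real \<Rightarrow> real"
  assumes "isCont f x" and "\<forall>\<^sub>F y in at x. (f has_real_derivative f' y) (at y)"
    and "(f' \<longlongrightarrow> L) (at x)"
  shows "(f has_real_derivative L) (at x)"
proof -
  have "((\<lambda>y. (f y - f x) / (y - x)) \<longlongrightarrow> L) (at x)"
  proof (rule lhopital[where f' = f' and g' = "\<lambda>_. 1"])
    show "((\<lambda>y. f y - f x) \<longlongrightarrow> 0) (at x)"
      using assms(1) by (simp add: isCont_def LIM_zero)
    show "((\<lambda>y. y - x) \<longlongrightarrow> 0) (at x)"
      by (intro LIM_zero tendsto_ident_at)
    show "\<forall>\<^sub>F y in at x. y - x \<noteq> 0"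
      by (simp add: eventually_at_filter)
    show "\<forall>\<^sub>F y in at x. ((\<lambda>y. f y - f x) has_real_derivative f' y) (at y)"
      using assms(2) by eventually_elim (auto intro!: derivative_eq_intros)
    show "\<forall>\<^sub>F y in at x. ((\<lambda>y. y - x) has_real_derivative 1) (at y)"
      by (intro always_eventually allI) (auto intro!: derivative_eq_intros)
    show "((\<lambda>y. f' y / 1) \<longlongrightarrow> L) (at x)"
      using assms(3) by simp
  qed simp
  then show ?thesis
    by (simp add: has_field_derivative_iff)
qed

lemma has_real_derivative_powr_div_power:
  fixes E :: "real \<Rightarrow> real"
  assumes dE: "(E has_real_derivative - (E x powr \<alpha>)) (at x)" and E: "E x > 0" and c: "c > 0"
  shows "((\<lambda>y. c * E y powr p / (c + E y) ^ Suc k) has_real_derivative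
     - p * (c * E x powr (p - 1 + \<alpha>) / (c + E x) ^ Suc k)
     + real (Suc k) * (c * E x powr (p + \<alpha>) / (c + E x) ^ Suc (Suc k))) (at x)"
proof -
  let ?e = "E x"
  have num: "((\<lambda>y. c * E y powr p) has_real_derivative c * (p * ?e powr (p - 1) * - (?e powr \<alpha>))) (at x)"
    using DERIV_cmult[OF DERIV_fun_powr[OF dE E]] by simp
  have den: "((\<lambda>y. (c + E y) ^ Suc k) has_real_derivative real (Suc k) * (c + ?e) ^ k * - (?e powr \<alpha>)) (at x)"
    using DERIV_power[OF DERIV_add[OF DERIV_const[of c] dE], where n = "Suc k"] by (simp add: mult_ac)
  have quotient: "(c * (p * q * - a) * D ^ Suc k - c * (q * e) * (real (Suc k) * D ^ k * - a))
      / (D ^ Suc k * D ^ Suc k)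
    = - p * (c * (q * a) / D ^ Suc k) + real (Suc k) * (c * (q * e * a) / D ^ Suc (Suc k))"
    if "D > 0" for q a e D :: real
    using that by (simp add: field_simps)
  have "?e powr p = ?e powr (p - 1) * ?e"
    using powr_add[of ?e "p - 1" 1] E by simp
  moreover have "?e powr (p + \<alpha>) = ?e powr (p - 1) * ?e * ?e powr \<alpha>"
    by (simp add: powr_add calculation)
  ultimately show ?thesis
    using DERIV_divide[OF num den] quotient[of "c + ?e" "?e powr (p - 1)" "?e powr \<alpha>" ?e] E c
    by (simp add: powr_add del: power_Suc)
qed

text \<open>\<open>F_sum \<alpha> c m e\<close> is \<open>\<Sum>k. F_term \<alpha> c m k x\<close> written in terms of \<open>e = exp_ext \<alpha> c (- x)\<close>,
  including the summand \<open>k = 0\<close>: it vanishes for \<open>m \<ge> 1\<close>, and for \<open>m = 0\<close> it is the sigmoid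
  \<open>c / (c + e)\<close> itself.\<close>

definition F_sum :: "real \<Rightarrow> real \<Rightarrow> nat \<Rightarrow> real \<Rightarrow> real" where
  "F_sum \<alpha> c m e =
     (\<Sum>k\<le>m. A_coef \<alpha> m k * (c * e powr (real k - real m * (1 - \<alpha>)) / (c + e) ^ Suc k))"

lemma F_sum_has_real_derivative:
  fixes E :: "real \<Rightarrow> real"
  assumes "(E has_real_derivative - (E x powr \<alpha>)) (at x)" and "E x > 0" and "c > 0"
  shows "((\<lambda>y. F_sum \<alpha> c m (E y)) has_real_derivative F_sum \<alpha> c (Suc m) (E x)) (at x)"
proof -
  define p where "p k = real k - real m * (1 - \<alpha>)" for k
  define T where "T k = c * E x powr (real k - real (Suc m) * (1 - \<alpha>)) / (c + E x) ^ Suc k" for k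
  have exponents: "p k - 1 + \<alpha> = real k - real (Suc m) * (1 - \<alpha>)"
    "p k + \<alpha> = real (Suc k) - real (Suc m) * (1 - \<alpha>)" for k
    by (simp_all add: p_def algebra_simps)
  have summand: "((\<lambda>y. c * E y powr p k / (c + E y) ^ Suc k) has_real_derivative
      - p k * T k + real (Suc k) * T (Suc k)) (at x)" for k
    using has_real_derivative_powr_div_power[OF assms, of "p k" k] unfolding exponents T_def .
  have "((\<lambda>y. F_sum \<alpha> c m (E y)) has_real_derivative
      (\<Sum>k\<le>m. A_coef \<alpha> m k * (- p k * T k + real (Suc k) * T (Suc k)))) (at x)"
    unfolding F_sum_def p_def[symmetric] by (intro DERIV_sum DERIV_cmult summand)
  also have "(\<Sum>k\<le>m. A_coef \<alpha> m k * (- p k * T k + real (Suc k) * T (Suc k)))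
      = (\<Sum>k\<le>m. - p k * A_coef \<alpha> m k * T k)
        + (\<Sum>k\<le>m. real (Suc k) * A_coef \<alpha> m k * T (Suc k))"
    by (simp add: sum.distrib[symmetric] algebra_simps del: of_nat_Suc)
  also have "(\<Sum>k\<le>m. - p k * A_coef \<alpha> m k * T k) = (\<Sum>k\<le>Suc m. - p k * A_coef \<alpha> m k * T k)"
    by (simp add: A_coef_eq_0_if_less)
  also have "(\<Sum>k\<le>m. real (Suc k) * A_coef \<alpha> m k * T (Suc k))
      = (\<Sum>k\<le>Suc m. real k * A_coef \<alpha> m (k - 1) * T k)"
    by (subst sum.atMost_Suc_shift) simp
  also have "(\<Sum>k\<le>Suc m. - p k * A_coef \<alpha> m k * T k)
      + (\<Sum>k\<le>Suc m. real k * A_coef \<alpha> m (k - 1) * T k)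
      = (\<Sum>k\<le>Suc m. A_coef \<alpha> (Suc m) k * T k)"
    unfolding sum.distrib[symmetric] A_coef_Suc[of \<alpha> m, folded p_def]
    by (simp add: ring_distribs del: sum.atMost_Suc)
  also have "\<dots> = F_sum \<alpha> c (Suc m) (E x)"
    by (simp add: F_sum_def T_def del: sum.atMost_Suc)
  finally show ?thesis .
qed

lemma F_sum_tendsto_at_top:
  assumes "real m * (\<alpha> - 1) < 1"
  shows "(F_sum \<alpha> c m \<longlongrightarrow> 0) at_top"
  unfolding F_sum_def[abs_def]
proof (intro tendsto_null_sum tendsto_mult_right_zero)
  fix k
  have "real k - real m * (1 - \<alpha>) < real (Suc k)"
    using assms by (simp add: algebra_simps)
  then show "((\<lambda>e. c * e powr (real k - real m * (1 - \<alpha>)) / (c + e) ^ Suc k) \<longlongrightarrow> 0) at_top"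
    by real_asymp
qed

lemma F_sum_tendsto_at_right_0:
  assumes "c > 0" and "real m * (1 - \<alpha>) < 1"
  shows "(F_sum \<alpha> c m \<longlongrightarrow> (if m = 0 then 1 else 0)) (at_right 0)"
proof (cases "m = 0")
  case True
  have "((\<lambda>e. c / (c + e)) \<longlongrightarrow> 1) (at_right 0)"
    using assms(1) by real_asymp
  moreover have "eventually (\<lambda>e. c / (c + e) = F_sum \<alpha> c 0 e) (at_right 0)"
    using eventually_at_right_less[of 0] by eventually_elim (simp add: F_sum_def)
  ultimately show ?thesis
    using True Lim_transform_eventually by fastforce
next
  case False
  have "((\<lambda>e. A_coef \<alpha> m k * (c * e powr (real k - real m * (1 - \<alpha>)) / (c + e) ^ Suc k)) \<longlongrightarrow> 0)
      (at_right 0)" for k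
  proof (cases "k = 0")
    case False
    then have "0 < real k - real m * (1 - \<alpha>)"
      using assms(2) by linarith
    with assms(1) show ?thesis
      by (intro tendsto_mult_right_zero) real_asymp
  qed (simp add: A_coef_right_0 \<open>m \<noteq> 0\<close>)
  then show ?thesis
    using False unfolding F_sum_def[abs_def] by (simp add: tendsto_null_sum)
qed

text \<open>For \<open>\<alpha> = 1\<close> we have \<open>c_alpha 1 c = 0\<close>, so \<open>x / 0 = 0\<close> makes \<open>sigma_base 1 c x = 1\<close>:
  the exponential case then needs no separate treatment, its boundary \<open>sigma_base = 0\<close> being empty.\<close>

definition sigma_base :: "real \<Rightarrow> real \<Rightarrow> real \<Rightarrow> real" where
  "sigma_base \<alpha> c x = 1 + x / c_alpha \<alpha> c"

lemma c_alpha_pos: "c > 0 \<Longrightarrow> \<alpha> > 1 \<Longrightarrow> c_alpha \<alpha> c > 0"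
  by (simp add: c_alpha_def)

lemma c_alpha_neg: "c > 0 \<Longrightarrow> \<alpha> < 1 \<Longrightarrow> c_alpha \<alpha> c < 0"
  by (simp add: c_alpha_def divide_pos_neg)

lemma c_alpha_eq_0_iff: "c > 0 \<Longrightarrow> c_alpha \<alpha> c = 0 \<longleftrightarrow> \<alpha> = 1"
  by (simp add: c_alpha_def)

lemma c_alpha_1 [simp]: "c_alpha 1 c = 0"
  by (simp add: c_alpha_def)

lemma sigma_base_1 [simp]: "sigma_base 1 c x = 1"
  by (simp add: sigma_base_def)

lemma exp_ext_minus: "\<alpha> \<noteq> 1 \<Longrightarrow> exp_ext \<alpha> c (- x) = c * sigma_base \<alpha> c x powr (1 / (1 - \<alpha>))"
  by (simp add: exp_ext_def sigma_base_def)

lemma sigma_base_eq_0_iff: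
  "c > 0 \<Longrightarrow> sigma_base \<alpha> c x = 0 \<longleftrightarrow> \<alpha> \<noteq> 1 \<and> x = - c_alpha \<alpha> c"
  by (cases "\<alpha> = 1") (auto simp: sigma_base_def c_alpha_def field_simps)

lemma dom_sigma_iff: "c > 0 \<Longrightarrow> x \<in> dom_sigma \<alpha> c \<longleftrightarrow> 0 \<le> sigma_base \<alpha> c x"
  using c_alpha_pos[of c \<alpha>] c_alpha_neg[of c \<alpha>]
  by (cases \<alpha> "1::real" rule: linorder_cases) (auto simp: dom_sigma_def sigma_base_def field_simps)

lemma sigma_base_nonpos_imp:
  assumes "c > 0" and "sigma_base \<alpha> c x \<le> 0"
  shows "\<alpha> \<noteq> 1" and "0 \<le> x \<longleftrightarrow> \<alpha> < 1"
proof -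
  show "\<alpha> \<noteq> 1" using assms(2) by auto
  then show "0 \<le> x \<longleftrightarrow> \<alpha> < 1"
    using assms c_alpha_pos[of c \<alpha>] c_alpha_neg[of c \<alpha>]
    by (cases \<alpha> "1::real" rule: linorder_cases) (auto simp: sigma_base_def field_simps)
qed

lemma continuous_on_sigma_base: "continuous_on UNIV (sigma_base \<alpha> c)"
  unfolding sigma_base_def[abs_def] divide_inverse by (intro continuous_intros)

lemma exp_ext_minus_pos: "c > 0 \<Longrightarrow> 0 < sigma_base \<alpha> c x \<Longrightarrow> 0 < exp_ext \<alpha> c (- x)"
  by (cases "\<alpha> = 1") (simp_all add: exp_ext_def[of 1] exp_ext_minus)

lemma exp_ext_minus_has_real_derivative:
  assumes c: "c > 0" and b: "0 < sigma_base \<alpha> c x"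
  shows "((\<lambda>y. exp_ext \<alpha> c (- y)) has_real_derivative - (exp_ext \<alpha> c (- x) powr \<alpha>)) (at x)"
proof (cases "\<alpha> = 1")
  case True
  then show ?thesis
    using c by (auto simp: exp_ext_def powr_def intro!: derivative_eq_intros)
next
  case False
  let ?\<beta> = "1 / (1 - \<alpha>)" and ?b = "sigma_base \<alpha> c x"
  have "(sigma_base \<alpha> c has_real_derivative 1 / c_alpha \<alpha> c) (at x)"
    unfolding sigma_base_def[abs_def] using False c
    by (auto simp: c_alpha_eq_0_iff intro!: derivative_eq_intros)
  from DERIV_cmult[OF DERIV_fun_powr[OF this b, of ?\<beta>], of c]
  have "((\<lambda>y. c * sigma_base \<alpha> c y powr ?\<beta>) has_real_derivative
      c * (?\<beta> * ?b powr (?\<beta> - 1) * (1 / c_alpha \<alpha> c))) (at x)"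
    by simp
  moreover have "c * (?\<beta> * ?b powr (?\<beta> - 1) * (1 / c_alpha \<alpha> c)) = - ((c * ?b powr ?\<beta>) powr \<alpha>)"
  proof -
    have inverse_c_alpha: "1 / c_alpha \<alpha> c = (\<alpha> - 1) * c powr \<alpha> / c"
      using c by (simp add: c_alpha_def powr_diff)
    have "(c * ?b powr ?\<beta>) powr \<alpha> = c powr \<alpha> * ?b powr (?\<beta> - 1)"
      using False b c by (simp add: powr_mult powr_powr field_simps)
    then show ?thesis
      unfolding inverse_c_alpha using False c by (simp add: field_simps)
  qed
  ultimately show ?thesis
    using False by (simp add: exp_ext_minus)
qed

definition sigtron_deriv_formula :: "real \<Rightarrow> real \<Rightarrow> nat \<Rightarrow> real \<Rightarrow> real" where
  "sigtron_deriv_formula \<alpha> c m = (if m = 0 then sigtron \<alpha> c else sigtron_nth_deriv \<alpha> c m)"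

lemma sigtron_deriv_formula_inside:
  assumes c: "c > 0" and b: "0 < sigma_base \<alpha> c x"
  shows "sigtron_deriv_formula \<alpha> c m x = F_sum \<alpha> c m (exp_ext \<alpha> c (- x))"
proof -
  have dom: "x \<in> dom_sigma \<alpha> c" and not_boundary: "\<not> (\<alpha> > 1 \<and> x = - c_alpha \<alpha> c)"
    using b dom_sigma_iff[OF c, of x] sigma_base_eq_0_iff[OF c, of \<alpha> x] by auto
  have E: "exp_ext \<alpha> c (- x) > 0"
    using exp_ext_minus_pos[OF c b] .
  show ?thesis
  proof (cases "m = 0")
    case True
    then show ?thesis
      using dom not_boundary E
      by (auto simp: sigtron_deriv_formula_def sigtron_def sigma_ext_def F_sum_def)
  next
    case False
    have "F_sum \<alpha> c m (exp_ext \<alpha> c (- x)) = (\<Sum>k\<in>{1..m}. F_term \<alpha> c m k x)"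
      unfolding F_sum_def atMost_atLeast0
      using False by (simp add: sum.atLeast_Suc_atMost A_coef_right_0 F_term_def)
    then show ?thesis
      using False dom not_boundary by (auto simp: sigtron_deriv_formula_def sigtron_nth_deriv_def)
  qed
qed

lemma sigtron_deriv_formula_nonpos:
  assumes c: "c > 0" and b: "sigma_base \<alpha> c x \<le> 0"
  shows "sigtron_deriv_formula \<alpha> c m x = (if m = 0 \<and> \<alpha> < 1 then 1 else 0)"
proof (cases "sigma_base \<alpha> c x = 0")
  case True
  then have x: "x = - c_alpha \<alpha> c" and dom: "x \<in> dom_sigma \<alpha> c" and "\<alpha> \<noteq> 1"
    using sigma_base_eq_0_iff[OF c, of \<alpha> x] dom_sigma_iff[OF c, of x] by auto
  moreover have "\<alpha> < 1 \<Longrightarrow> exp_ext \<alpha> c (- x) = 0"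
    using True \<open>\<alpha> \<noteq> 1\<close> by (simp add: exp_ext_minus)
  ultimately show ?thesis
    using c
    by (auto simp: sigtron_deriv_formula_def sigtron_def sigma_ext_def sigtron_nth_deriv_def F_term_def)
next
  case False
  then have "x \<notin> dom_sigma \<alpha> c"
    using b dom_sigma_iff[OF c] by auto
  then show ?thesis
    using sigma_base_nonpos_imp[OF c b]
    by (simp add: sigtron_deriv_formula_def sigtron_def sigtron_nth_deriv_def perceptron_def)
qed

lemma sigtron_deriv_formula_has_real_derivative_off_boundary:
  assumes c: "c > 0" and b: "sigma_base \<alpha> c x \<noteq> 0"
  shows "(sigtron_deriv_formula \<alpha> c m has_real_derivative sigtron_deriv_formula \<alpha> c (Suc m) x) (at x)"
proof (cases "0 < sigma_base \<alpha> c x")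
  case True
  let ?S = "{y. 0 < sigma_base \<alpha> c y}"
  have "open ?S"
    using continuous_on_sigma_base by (intro open_Collect_less continuous_on_const)
  moreover have "((\<lambda>y. F_sum \<alpha> c m (exp_ext \<alpha> c (- y))) has_real_derivative
      F_sum \<alpha> c (Suc m) (exp_ext \<alpha> c (- x))) (at x)"
    using True c by (intro F_sum_has_real_derivative exp_ext_minus_has_real_derivative exp_ext_minus_pos)
  ultimately show ?thesis
    using True c
    by (auto simp: sigtron_deriv_formula_inside intro: has_field_derivative_transform_within_open)
next
  case False
  let ?S = "{y. sigma_base \<alpha> c y < 0}"
  have "open ?S"
    using continuous_on_sigma_base by (intro open_Collect_less continuous_on_const)
  then have "(sigtron_deriv_formula \<alpha> c m has_real_derivative 0) (at x)"
    using False b c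
    by (intro has_field_derivative_transform_within_open[OF DERIV_const, where S = ?S])
       (auto simp: sigtron_deriv_formula_nonpos)
  then show ?thesis
    using False c by (simp add: sigtron_deriv_formula_nonpos)
qed

lemma F_sum_exp_ext_tendsto_boundary:
  assumes c: "c > 0" and \<alpha>: "\<alpha> \<noteq> 1" and m: "real m * \<bar>\<alpha> - 1\<bar> < 1"
  shows "((\<lambda>x. F_sum \<alpha> c m (exp_ext \<alpha> c (- x))) \<longlongrightarrow> (if m = 0 \<and> \<alpha> < 1 then 1 else 0))
    (at (- c_alpha \<alpha> c) within {x. 0 < sigma_base \<alpha> c x})"
    (is "(_ \<longlongrightarrow> _) ?F")
proof -
  let ?\<beta> = "1 / (1 - \<alpha>)"
  have "sigma_base \<alpha> c (- c_alpha \<alpha> c) = 0"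
    using \<alpha> c by (simp add: sigma_base_eq_0_iff)
  moreover have "(sigma_base \<alpha> c \<longlongrightarrow> sigma_base \<alpha> c (- c_alpha \<alpha> c)) ?F"
    using continuous_on_sigma_base
    by (intro tendsto_within_subset[OF isContD]) (auto simp: continuous_on_eq_continuous_at)
  ultimately have base: "filterlim (sigma_base \<alpha> c) (at_right 0) ?F"
    by (auto simp: filterlim_at eventually_at_filter)
  have E: "exp_ext \<alpha> c (- x) = c * sigma_base \<alpha> c x powr ?\<beta>" for x
    using \<alpha> by (rule exp_ext_minus)
  show ?thesis
  proof (cases "\<alpha> < 1")
    case True
    have "filterlim (\<lambda>b. c * b powr ?\<beta>) (at_right 0) (at_right 0)"
      using True c by real_asymp
    from filterlim_compose[OF this base]
    have E_lim: "filterlim (\<lambda>x. exp_ext \<alpha> c (- x)) (at_right 0) ?F"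
      unfolding E .
    have "real m * (1 - \<alpha>) < 1"
      using True m by simp
    from filterlim_compose[OF F_sum_tendsto_at_right_0[OF c this] E_lim]
    show ?thesis
      using True by simp
  next
    case False
    have "filterlim (\<lambda>b. c * b powr ?\<beta>) at_top (at_right 0)"
      using False \<alpha> c by real_asymp
    from filterlim_compose[OF this base]
    have E_lim: "filterlim (\<lambda>x. exp_ext \<alpha> c (- x)) at_top ?F"
      unfolding E .
    have "real m * (\<alpha> - 1) < 1"
      using False m by simp
    from filterlim_compose[OF F_sum_tendsto_at_top[OF this] E_lim]
    show ?thesis
      using False by simp
  qed
qed

lemma isCont_sigtron_deriv_formula:
  assumes c: "c > 0" and m: "real m * \<bar>\<alpha> - 1\<bar> < 1"
  shows "isCont (sigtron_deriv_formula \<alpha> c m) x"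
proof (cases "sigma_base \<alpha> c x = 0")
  case False
  from sigtron_deriv_formula_has_real_derivative_off_boundary[OF c False] show ?thesis
    by (rule DERIV_isCont)
next
  case True
  then have \<alpha>: "\<alpha> \<noteq> 1" and x: "x = - c_alpha \<alpha> c"
    using sigma_base_eq_0_iff[OF c] by auto
  let ?L = "if m = 0 \<and> \<alpha> < 1 then 1 else 0"
  let ?S = "{y. 0 < sigma_base \<alpha> c y}" and ?T = "{y. sigma_base \<alpha> c y < 0}"
  have "y \<in> ?S \<union> ?T" if "y \<noteq> x" for y
    using that x sigma_base_eq_0_iff[OF c, of \<alpha> y] by auto
  then have "at x = at x within (?S \<union> ?T)"
    by (intro at_within_nhd[where S = UNIV]) blast+
  then have split: "at x = sup (at x within ?S) (at x within ?T)"
    by (simp add: at_within_union)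
  have "(sigtron_deriv_formula \<alpha> c m \<longlongrightarrow> ?L) (at x within ?S)"
    using F_sum_exp_ext_tendsto_boundary[OF c \<alpha> m, folded x]
    by (rule Lim_transform_eventually)
       (auto simp: eventually_at_filter sigtron_deriv_formula_inside[OF c])
  moreover have "(sigtron_deriv_formula \<alpha> c m \<longlongrightarrow> ?L) (at x within ?T)"
    by (rule tendsto_eventually)
       (auto simp: eventually_at_filter sigtron_deriv_formula_nonpos[OF c])
  ultimately have "(sigtron_deriv_formula \<alpha> c m \<longlongrightarrow> ?L) (at x)"
    unfolding split by (rule filterlim_sup)
  then show ?thesis
    using True c by (simp add: continuous_at sigtron_deriv_formula_nonpos)
qed

lemma sigtron_deriv_formula_has_real_derivative:
  assumes c: "c > 0" and m: "real (Suc m) * \<bar>\<alpha> - 1\<bar> < 1"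
  shows "(sigtron_deriv_formula \<alpha> c m has_real_derivative sigtron_deriv_formula \<alpha> c (Suc m) x) (at x)"
proof (cases "sigma_base \<alpha> c x = 0")
  case False
  with c show ?thesis
    by (rule sigtron_deriv_formula_has_real_derivative_off_boundary)
next
  case True
  have "real m * \<bar>\<alpha> - 1\<bar> \<le> real (Suc m) * \<bar>\<alpha> - 1\<bar>"
    by (intro mult_right_mono) auto
  with m have "isCont (sigtron_deriv_formula \<alpha> c m) x"
    by (intro isCont_sigtron_deriv_formula[OF c]) simp
  moreover have "\<forall>\<^sub>F y in at x. y \<noteq> x"
    by (simp add: eventually_at_filter)
  then have "\<forall>\<^sub>F y in at x.
      (sigtron_deriv_formula \<alpha> c m has_real_derivative sigtron_deriv_formula \<alpha> c (Suc m) y) (at y)"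
    by eventually_elim
       (use True c in \<open>auto simp: sigma_base_eq_0_iff
          intro!: sigtron_deriv_formula_has_real_derivative_off_boundary\<close>)
  moreover have "(sigtron_deriv_formula \<alpha> c (Suc m) \<longlongrightarrow> sigtron_deriv_formula \<alpha> c (Suc m) x) (at x)"
    using isCont_sigtron_deriv_formula[OF c m] by (rule isContD)
  ultimately show ?thesis
    by (rule DERIV_from_tendsto_derivative)
qed

lemma funpow_deriv_sigtron:
  assumes c: "c > 0" and n: "real n * \<bar>\<alpha> - 1\<bar> < 1" and "m \<le> n"
  shows "(deriv ^^ m) (sigtron \<alpha> c) = sigtron_deriv_formula \<alpha> c m"
  using \<open>m \<le> n\<close>
proof (induction m)
  case 0
  show ?case by (simp add: sigtron_deriv_formula_def)
next
  case (Suc m)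
  have "real (Suc m) * \<bar>\<alpha> - 1\<bar> \<le> real n * \<bar>\<alpha> - 1\<bar>"
    using Suc.prems by (intro mult_right_mono) auto
  with n have "deriv (sigtron_deriv_formula \<alpha> c m) = sigtron_deriv_formula \<alpha> c (Suc m)"
    by (intro ext DERIV_imp_deriv sigtron_deriv_formula_has_real_derivative[OF c]) simp
  with Suc show ?case by simp
qed

theorem theorem2:
  fixes c \<alpha> :: real and n :: nat
  assumes "c > 0" and "\<alpha> \<ge> 0" and "n \<ge> 1"
    and "1 - 1 / real n < \<alpha>" and "\<alpha> < 1 + 1 / real n"
  shows "(\<forall>m<n. \<forall>x. ((deriv ^^ m) (sigtron \<alpha> c) has_real_derivative
             (deriv ^^ Suc m) (sigtron \<alpha> c) x) (at x))
       \<and> continuous_on UNIV ((deriv ^^ n) (sigtron \<alpha> c))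
       \<and> (\<forall>x. (deriv ^^ n) (sigtron \<alpha> c) x = sigtron_nth_deriv \<alpha> c n x)"
proof -
  have "\<bar>\<alpha> - 1\<bar> < 1 / real n"
    using assms(4,5) by linarith
  then have n: "real n * \<bar>\<alpha> - 1\<bar> < 1"
    using assms(3) by (simp add: field_simps)
  note formula = funpow_deriv_sigtron[OF assms(1) n]
  show ?thesis
  proof (intro conjI allI impI)
    fix m x
    assume "m < n"
    then have "real (Suc m) * \<bar>\<alpha> - 1\<bar> \<le> real n * \<bar>\<alpha> - 1\<bar>"
      by (intro mult_right_mono) auto
    with n have "real (Suc m) * \<bar>\<alpha> - 1\<bar> < 1"
      by linarith
    then show "((deriv ^^ m) (sigtron \<alpha> c) has_real_derivative
        (deriv ^^ Suc m) (sigtron \<alpha> c) x) (at x)"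
      unfolding formula[OF Suc_leI[OF \<open>m < n\<close>]] formula[OF less_imp_le[OF \<open>m < n\<close>]]
      by (rule sigtron_deriv_formula_has_real_derivative[OF assms(1)])
  next
    show "continuous_on UNIV ((deriv ^^ n) (sigtron \<alpha> c))"
      using isCont_sigtron_deriv_formula[OF assms(1) n]
      by (simp add: formula continuous_at_imp_continuous_on)
  next
    show "(deriv ^^ n) (sigtron \<alpha> c) x = sigtron_nth_deriv \<alpha> c n x" for x
      using assms(3) by (simp add: formula sigtron_deriv_formula_def)
  qed
qed

end
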